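(* Let $\mathcal{H}_\ell,\mathcal{H}_r$ be Hilbert spaces, $\mathcal{H}_S$ a finite-dimensional Hilbert space, $H_\ell,H_S,H_r$ self-adjoint operators on $\mathcal{H}_\ell,\mathcal{H}_S,\mathcal{H}_r$, and $\chi_\ell\in\mathcal{H}_\ell$, $\chi_r\in\mathcal{H}_r$, $\delta_\ell,\delta_r\in\mathcal{H}_S$ non-zero vectors. On $\mathcal{H}=\mathcal{H}_\ell\oplus\mathcal{H}_S\oplus\mathcal{H}_r$ let $H_0=H_\ell+H_S+H_r$ and $H_{\lambda,\nu}=H_0+\lambda[(\chi_\ell,\cdot)\delta_\ell+(\delta_\ell,\cdot)\chi_\ell]+\nu[(\chi_r,\cdot)\delta_r+(\delta_r,\cdot)\chi_r]$ for $\lambda,\nu\in\mathbb{R}$. Then for $z\in\mathbb{C}\setminus\mathbb{R}$, $$G_{\lambda,\nu}(\delta_\ell,\delta_\ell,z)=\frac{1}{D(z)}\Big[\big(1-\nu^2G_0(\chi_r,\chi_r,z)G_0(\delta_r,\delta_r,z)\big)G_0(\delta_\ell,\delta_\ell,z)+\nu^2G_0(\chi_r,\chi_r,z)G_0(\delta_\ell,\delta_r,z)G_0(\delta_r,\delta_\ell,z)\Big],$$ $$G_{\lambda,\nu}(\chi_\ell,\chi_\ell,z)=\frac{1}{D(z)}\Big[G_0(\chi_\ell,\chi_\ell,z)\big(1-\nu^2G_0(\chi_r,\chi_r,z)G_0(\delta_r,\delta_r,z)\big)\Big],$$ where $$D(z)=\big(1-\nu^2G_0(\chi_r,\chi_r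,z)G_0(\delta_r,\delta_r,z)\big)\big(1-\lambda^2G_0(\chi_\ell,\chi_\ell,z)G_0(\delta_\ell,\delta_\ell,z)\big)-\nu^2\lambda^2G_0(\chi_r,\chi_r,z)G_0(\chi_\ell,\chi_\ell,z)G_0(\delta_\ell,\delta_r,z)G_0(\delta_r,\delta_\ell,z).$$
   Context: For $\varphi,\psi\in\mathcal{H}$ and $z\in\mathbb{C}\setminus\mathbb{R}$, $G_{\lambda,\nu}(\varphi,\psi,z)=(\varphi,(H_{\lambda,\nu}-z)^{-1}\psi)$ and $G_0=G_{0,0}$ (the resolvent of $H_0$); the inner product is linear in the second argument. *)

theory Defs
  imports Complex_Main "HOL-Library.Product_Plus"
begin

class cvector = ab_group_add +
  fixes scaleC :: "complex \<Rightarrow> 'a \<Rightarrow> 'a" (infixr \<open>*\<^sub>C\<close> 75)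
  assumes scaleC_add_right: "a *\<^sub>C (x + y) = a *\<^sub>C x + a *\<^sub>C y"
    and scaleC_add_left: "(a + b) *\<^sub>C x = a *\<^sub>C x + b *\<^sub>C x"
    and scaleC_scaleC: "a *\<^sub>C (b *\<^sub>C x) = (a * b) *\<^sub>C x"
    and scaleC_one: "1 *\<^sub>C x = x"

text \<open>Inner product: conjugate-linear in the first, linear in the second argument.\<close>
class cinner_space = cvector +
  fixes cinner :: "'a \<Rightarrow> 'a \<Rightarrow> complex"
  assumes cinner_conj_sym: "cinner x y = cnj (cinner y x)"
    and cinner_add_right: "cinner x (y + z) = cinner x y + cinner x z"
    and cinner_scaleC_right: "cinner x (a *\<^sub>C y) = a * cinner x y"
    and cinner_pos: "0 \<le> Re (cinner x x)"
    and cinner_eq_zero_iff: "cinner x x = 0 \<longleftrightarrow> x = 0"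

definition cnorm :: "'a::cinner_space \<Rightarrow> real" where
  "cnorm x = sqrt (Re (cinner x x))"

class chilbert = cinner_space +
  assumes cauchy_complete:
    "(\<forall>e::real>0. \<exists>N::nat. \<forall>m\<ge>N. \<forall>n\<ge>N. sqrt (Re (cinner (X m - X n) (X m - X n))) < e) \<Longrightarrow>
       \<exists>L. \<forall>e::real>0. \<exists>N::nat. \<forall>n\<ge>N. sqrt (Re (cinner (X n - L) (X n - L))) < e"

definition finite_dimensional :: "'a::cvector itself \<Rightarrow> bool" where
  "finite_dimensional (_ :: 'a itself) \<longleftrightarrow>
     (\<exists>B :: 'a set. finite B \<and> (\<forall>x. \<exists>c. x = (\<Sum>b\<in>B. c b *\<^sub>C b)))"

instantiation prod :: (cvector, cvector) cvector
begin
definition scaleC_prod_def: "a *\<^sub>C x = (a *\<^sub>C fst x, a *\<^sub>C snd x)"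
instance
proof
  fix a b :: complex and x y :: "'a \<times> 'b"
  show "a *\<^sub>C (x + y) = a *\<^sub>C x + a *\<^sub>C y" by (simp add: scaleC_prod_def scaleC_add_right)
  show "(a + b) *\<^sub>C x = a *\<^sub>C x + b *\<^sub>C x" by (simp add: scaleC_prod_def scaleC_add_left)
  show "a *\<^sub>C (b *\<^sub>C x) = (a * b) *\<^sub>C x" by (simp add: scaleC_prod_def scaleC_scaleC)
  show "1 *\<^sub>C x = x" by (simp add: scaleC_prod_def scaleC_one)
qed
end

instantiation prod :: (cinner_space, cinner_space) cinner_space
begin
definition cinner_prod_def: "cinner x y = cinner (fst x) (fst y) + cinner (snd x) (snd y)"
instance
proof
  fix x y z :: "'a \<times> 'b" and a :: complex
  show "cinner x y = cnj (cinner y x)"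
    by (simp only: cinner_prod_def complex_cnj_add cinner_conj_sym[of "fst x" "fst y"]
        cinner_conj_sym[of "snd x" "snd y"])
  show "cinner x (y + z) = cinner x y + cinner x z"
    by (simp only: cinner_prod_def fst_add snd_add cinner_add_right add_ac)
  show "cinner x (a *\<^sub>C y) = a * cinner x y"
    by (simp only: cinner_prod_def scaleC_prod_def fst_conv snd_conv cinner_scaleC_right distrib_left)
  show "0 \<le> Re (cinner x x)"
    using cinner_pos[of "fst x"] cinner_pos[of "snd x"] by (simp add: cinner_prod_def)
  have im0: "Im c = 0" if "c = cnj c" for c :: complex
    using arg_cong[OF that, of Im] by simp
  have i1: "Im (cinner (fst x) (fst x)) = 0"
    by (rule im0) (rule cinner_conj_sym)
  have i2: "Im (cinner (snd x) (snd x)) = 0"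
    by (rule im0) (rule cinner_conj_sym)
  show "cinner x x = 0 \<longleftrightarrow> x = 0"
  proof
    assume h: "cinner x x = 0"
    have "Re (cinner (fst x) (fst x)) = 0" "Re (cinner (snd x) (snd x)) = 0"
      using h cinner_pos[of "fst x"] cinner_pos[of "snd x"]
      by (simp_all add: cinner_prod_def complex_eq_iff)
    then have "cinner (fst x) (fst x) = 0" "cinner (snd x) (snd x) = 0"
      using i1 i2 by (simp_all add: complex_eq_iff)
    then show "x = 0" by (simp add: cinner_eq_zero_iff prod_eq_iff)
  next
    assume "x = 0"
    moreover have "cinner (0::'a) 0 = 0" "cinner (0::'b) 0 = 0"
      by (simp_all only: cinner_eq_zero_iff)
    ultimately show "cinner x x = 0" by (simp add: cinner_prod_def)
  qed
qed
end

text \<open>An operator is given by its domain D and its action A (relevant only on D).\<close>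

definition csubspace :: "'a::cvector set \<Rightarrow> bool" where
  "csubspace D \<longleftrightarrow> 0 \<in> D \<and> (\<forall>x\<in>D. \<forall>y\<in>D. x + y \<in> D) \<and> (\<forall>a. \<forall>x\<in>D. a *\<^sub>C x \<in> D)"

definition clinear_on :: "'a::cvector set \<Rightarrow> ('a \<Rightarrow> 'b::cvector) \<Rightarrow> bool" where
  "clinear_on D A \<longleftrightarrow> (\<forall>x\<in>D. \<forall>y\<in>D. A (x + y) = A x + A y) \<and> (\<forall>a. \<forall>x\<in>D. A (a *\<^sub>C x) = a *\<^sub>C A x)"

definition dense_set :: "'a::cinner_space set \<Rightarrow> bool" where
  "dense_set D \<longleftrightarrow> (\<forall>x. \<forall>e::real>0. \<exists>y\<in>D. cnorm (x - y) < e)"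

definition adjoint_domain :: "'a::cinner_space set \<Rightarrow> ('a \<Rightarrow> 'a) \<Rightarrow> 'a set" where
  "adjoint_domain D A = {\<psi>. \<exists>\<eta>. \<forall>\<phi>\<in>D. cinner \<psi> (A \<phi>) = cinner \<eta> \<phi>}"

text \<open>Self-adjoint: densely defined linear operator with A* = A, i.e. A is symmetric and
  the domain of A* is contained in the domain of A.\<close>
definition self_adjoint :: "'a::cinner_space set \<Rightarrow> ('a \<Rightarrow> 'a) \<Rightarrow> bool" where
  "self_adjoint D A \<longleftrightarrow> csubspace D \<and> clinear_on D A \<and> dense_set D \<and>
     (\<forall>\<phi>\<in>D. \<forall>\<psi>\<in>D. cinner \<phi> (A \<psi>) = cinner (A \<phi>) \<psi>) \<and>
     adjoint_domain D A \<subseteq> D"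

definition resolvent :: "'a::cvector set \<Rightarrow> ('a \<Rightarrow> 'a) \<Rightarrow> complex \<Rightarrow> 'a \<Rightarrow> 'a" where
  "resolvent D A z \<psi> = (THE \<phi>. \<phi> \<in> D \<and> A \<phi> - z *\<^sub>C \<phi> = \<psi>)"

definition green :: "'a::cinner_space set \<Rightarrow> ('a \<Rightarrow> 'a) \<Rightarrow> 'a \<Rightarrow> 'a \<Rightarrow> complex \<Rightarrow> complex" where
  "green D A \<phi> \<psi> z = cinner \<phi> (resolvent D A z \<psi>)"

definition inl3 :: "'l \<Rightarrow> 'l \<times> 's::zero \<times> 'r::zero" where "inl3 x = (x, 0, 0)"
definition ins3 :: "'s \<Rightarrow> 'l::zero \<times> 's \<times> 'r::zero" where "ins3 x = (0, x, 0)"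
definition inr3 :: "'r \<Rightarrow> 'l::zero \<times> 's::zero \<times> 'r" where "inr3 x = (0, 0, x)"

definition dom0 :: "'l set \<Rightarrow> 's set \<Rightarrow> 'r set \<Rightarrow> ('l \<times> 's \<times> 'r) set" where
  "dom0 Dl DS Dr = Dl \<times> DS \<times> Dr"

definition H0op :: "('l \<Rightarrow> 'l) \<Rightarrow> ('s \<Rightarrow> 's) \<Rightarrow> ('r \<Rightarrow> 'r) \<Rightarrow> 'l \<times> 's \<times> 'r \<Rightarrow> 'l \<times> 's \<times> 'r" where
  "H0op Hl HS Hr x = (Hl (fst x), HS (fst (snd x)), Hr (snd (snd x)))"

definition Hlamnu ::
  "('l::cinner_space \<Rightarrow> 'l) \<Rightarrow> ('s::cinner_space \<Rightarrow> 's) \<Rightarrow> ('r::cinner_space \<Rightarrow> 'r) \<Rightarrow>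
   'l \<Rightarrow> 'r \<Rightarrow> 's \<Rightarrow> 's \<Rightarrow> real \<Rightarrow> real \<Rightarrow> 'l \<times> 's \<times> 'r \<Rightarrow> 'l \<times> 's \<times> 'r" where
  "Hlamnu Hl HS Hr \<chi>l \<chi>r \<delta>l \<delta>r lam nu x =
     H0op Hl HS Hr x
     + complex_of_real lam *\<^sub>C (cinner (inl3 \<chi>l) x *\<^sub>C ins3 \<delta>l + cinner (ins3 \<delta>l) x *\<^sub>C inl3 \<chi>l)
     + complex_of_real nu *\<^sub>C (cinner (inr3 \<chi>r) x *\<^sub>C ins3 \<delta>r + cinner (ins3 \<delta>r) x *\<^sub>C inr3 \<chi>r)"

end

theory Submission
  imports Defs
begin

text \<open>\<open>H\<^sub>\<lambda>\<^sub>,\<^sub>\<nu>\<close> is a perturbation of \<open>H\<^sub>0 = H\<^sub>l \<oplus> H\<^sub>S \<oplus> H\<^sub>r\<close> of rank four. Writing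
  \<open>R\<^sub>l, R\<^sub>S, R\<^sub>r\<close> for the resolvents of the three blocks at \<open>z\<close>, the solution of
  \<open>(H\<^sub>\<lambda>\<^sub>,\<^sub>\<nu> - z)(u, v, w) = (\<psi>\<^sub>l, \<psi>\<^sub>S, \<psi>\<^sub>r)\<close> has the form
  \<open>u = R\<^sub>l \<psi>\<^sub>l - \<lambda> b R\<^sub>l \<chi>\<^sub>l\<close>, \<open>v = R\<^sub>S \<psi>\<^sub>S - \<lambda> a R\<^sub>S \<delta>\<^sub>l - \<nu> c R\<^sub>S \<delta>\<^sub>r\<close>,
  \<open>w = R\<^sub>r \<psi>\<^sub>r - \<nu> d R\<^sub>r \<chi>\<^sub>r\<close>, where \<open>a = (\<chi>\<^sub>l, u)\<close>, \<open>b = (\<delta>\<^sub>l, v)\<close>, \<open>c = (\<chi>\<^sub>r, w)\<close>,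
  \<open>d = (\<delta>\<^sub>r, v)\<close>. Eliminating \<open>a\<close> and \<open>c\<close> leaves a 2 \<times> 2 linear system for \<open>b\<close> and \<open>d\<close>
  whose determinant is \<open>D(z)\<close>, and Cramer's rule gives both Green functions. \<open>D(z) \<noteq> 0\<close>
  because \<open>H\<^sub>\<lambda>\<^sub>,\<^sub>\<nu>\<close> is symmetric, so that \<open>H\<^sub>\<lambda>\<^sub>,\<^sub>\<nu> - z\<close> is injective and a kernel vector of the
  system would produce a non-zero solution of \<open>(H\<^sub>\<lambda>\<^sub>,\<^sub>\<nu> - z) \<phi> = 0\<close>.

  The resolvents of the blocks exist because \<open>A - z\<close> is onto for self-adjoint \<open>A\<close> and non-real
  \<open>z\<close>: the bound \<open>\<parallel>(A - z) \<phi>\<parallel> \<ge> |Im z| \<parallel>\<phi>\<parallel>\<close> and the closed graph make its range closed,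
  the projection theorem yields a point of the range nearest to \<open>\<psi>\<close>, and \<open>\<psi>\<close> minus that point is
  orthogonal to the range, hence an eigenvector of \<open>A = A\<^sup>*\<close> for the eigenvalue \<open>cnj z\<close>, hence zero.\<close>

lemma scaleC_zero_left [simp]: "(0::complex) *\<^sub>C (x::'a::cvector) = 0"
proof -
  have "0 *\<^sub>C x + 0 *\<^sub>C x = 0 *\<^sub>C x + (0::'a)" using scaleC_add_left[of 0 0 x] by simp
  then show ?thesis by simp
qed

lemma scaleC_zero_right [simp]: "a *\<^sub>C (0::'a::cvector) = 0"
proof -
  have "a *\<^sub>C 0 + a *\<^sub>C 0 = a *\<^sub>C 0 + (0::'a)" using scaleC_add_right[of a 0 0] by simp
  then show ?thesis by simp
qed

lemma scaleC_minus_left: "(- a) *\<^sub>C (x::'a::cvector) = - (a *\<^sub>C x)"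
  using scaleC_add_left[of a "-a" x] by (simp add: eq_neg_iff_add_eq_0 add.commute)

lemma scaleC_minus_right: "a *\<^sub>C (- x::'a::cvector) = - (a *\<^sub>C x)"
  using scaleC_add_right[of a x "-x"] by (simp add: eq_neg_iff_add_eq_0 add.commute)

lemma scaleC_diff_right: "a *\<^sub>C (x - y::'a::cvector) = a *\<^sub>C x - a *\<^sub>C y"
  using scaleC_add_right[of a x "-y"] by (simp add: scaleC_minus_right)

lemma scaleC_minus_one: "(-1) *\<^sub>C (x::'a::cvector) = - x"
  by (simp add: scaleC_minus_left scaleC_one)

lemma cnj_cinner [simp]: "cnj (cinner x (y::'a::cinner_space)) = cinner y x"
  by (subst cinner_conj_sym) simp

lemma cinner_add_left: "cinner (x + y::'a::cinner_space) z = cinner x z + cinner y z"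
  by (metis cinner_add_right cnj_cinner complex_cnj_add)

lemma cinner_scaleC_left: "cinner (a *\<^sub>C x::'a::cinner_space) y = cnj a * cinner x y"
  by (metis cinner_scaleC_right cnj_cinner complex_cnj_mult)

lemma cinner_zero_left [simp]: "cinner (0::'a::cinner_space) y = 0"
  using cinner_add_left[of "0::'a" 0 y] by simp

lemma cinner_zero_right [simp]: "cinner (y::'a::cinner_space) 0 = 0"
  using cinner_add_right[of y "0::'a" 0] by simp

lemma cinner_minus_left: "cinner (- x::'a::cinner_space) y = - cinner x y"
  using cinner_add_left[of x "-x" y] by (simp add: eq_neg_iff_add_eq_0 add.commute)

lemma cinner_minus_right: "cinner (y::'a::cinner_space) (- x) = - cinner y x"
  using cinner_add_right[of y x "-x"] by (simp add: eq_neg_iff_add_eq_0 add.commute)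

lemma cinner_diff_left: "cinner (x - y::'a::cinner_space) z = cinner x z - cinner y z"
  using cinner_add_left[of x "-y" z] by (simp add: cinner_minus_left)

lemma cinner_diff_right: "cinner (z::'a::cinner_space) (x - y) = cinner z x - cinner z y"
  using cinner_add_right[of z x "-y"] by (simp add: cinner_minus_right)

lemmas cinner_simps = cinner_add_left cinner_add_right cinner_scaleC_left cinner_scaleC_right
  cinner_diff_left cinner_diff_right cinner_minus_left cinner_minus_right

abbreviation sqnorm :: "'a::cinner_space \<Rightarrow> real" where
  "sqnorm x \<equiv> Re (cinner x x)"

lemma Im_cinner_self [simp]: "Im (cinner (x::'a::cinner_space) x) = 0"
  using arg_cong[OF cinner_conj_sym[of x x], of Im] by (simp del: cnj_cinner)

lemma of_real_sqnorm: "complex_of_real (sqnorm x) = cinner (x::'a::cinner_space) x"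
  by (simp add: complex_eq_iff)

lemma sqnorm_eq_zero_iff: "sqnorm (x::'a::cinner_space) = 0 \<longleftrightarrow> x = 0"
  by (metis cinner_eq_zero_iff of_real_sqnorm of_real_0 zero_complex.simps(1))

lemma sqnorm_add: "sqnorm (x + y::'a::cinner_space) = sqnorm x + sqnorm y + 2 * Re (cinner x y)"
proof -
  have "Re (cinner y x) = Re (cinner x y)"
    using arg_cong[OF cinner_conj_sym[of y x], of Re] by (simp del: cnj_cinner)
  then show ?thesis by (simp add: cinner_simps)
qed

lemma sqnorm_diff: "sqnorm (x - y::'a::cinner_space) = sqnorm x + sqnorm y - 2 * Re (cinner x y)"
  using sqnorm_add[of x "- y"] by (simp add: cinner_minus_right cinner_minus_left)

lemma complex_of_cmod_squared: "(complex_of_real (cmod c))\<^sup>2 = c * cnj c"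
  by (metis complex_norm_square of_real_power)

lemma sqnorm_scaleC: "sqnorm (a *\<^sub>C x::'a::cinner_space) = (cmod a)\<^sup>2 * sqnorm x"
proof -
  have "cinner (a *\<^sub>C x) (a *\<^sub>C x) = complex_of_real ((cmod a)\<^sup>2 * sqnorm x)"
    by (simp add: cinner_simps of_real_sqnorm complex_of_cmod_squared mult.commute)
  then show ?thesis by simp
qed

lemma cauchy_schwarz: "(cmod (cinner (x::'a::cinner_space) y))\<^sup>2 \<le> sqnorm x * sqnorm y"
proof (cases "x = 0")
  case False
  define c where "c = cinner x y"
  define n where "n = sqnorm x"
  have n: "n > 0"
    using False sqnorm_eq_zero_iff cinner_pos unfolding n_def by (metis less_eq_real_def)
  \<comment> \<open>expand \<open>0 \<le> \<parallel>n y - c x\<parallel>\<^sup>2\<close>\<close>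
  have "cinner (complex_of_real n *\<^sub>C y - c *\<^sub>C x) (complex_of_real n *\<^sub>C y - c *\<^sub>C x)
      = complex_of_real (n * n) * cinner y y - complex_of_real n * (cmod c)\<^sup>2"
    by (simp add: cinner_simps c_def n_def of_real_sqnorm algebra_simps complex_of_cmod_squared)
  then have "0 \<le> n * n * sqnorm y - n * (cmod c)\<^sup>2"
    using cinner_pos[of "complex_of_real n *\<^sub>C y - c *\<^sub>C x"] by simp
  then have "n * (cmod c)\<^sup>2 \<le> n * (n * sqnorm y)" by (simp add: algebra_simps)
  then show ?thesis using n by (simp add: c_def n_def)
qed simp

lemma cnorm_nonneg: "0 \<le> cnorm x"
  by (simp add: cnorm_def cinner_pos)

lemma cnorm_squared: "(cnorm (x::'a::cinner_space))\<^sup>2 = sqnorm x"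
  using cinner_pos[of x] by (simp add: cnorm_def)

lemma cnorm_zero [simp]: "cnorm (0::'a::cinner_space) = 0"
  by (simp add: cnorm_def)

lemma cnorm_eq_zero_iff: "cnorm (x::'a::cinner_space) = 0 \<longleftrightarrow> x = 0"
  by (simp add: cnorm_def sqnorm_eq_zero_iff cinner_pos)

lemma cnorm_pos: "x \<noteq> 0 \<Longrightarrow> 0 < cnorm (x::'a::cinner_space)"
  using cnorm_eq_zero_iff cnorm_nonneg by (metis less_eq_real_def)

lemma cnorm_scaleC: "cnorm (a *\<^sub>C x::'a::cinner_space) = cmod a * cnorm x"
  by (simp add: cnorm_def sqnorm_scaleC real_sqrt_mult)

lemma cnorm_minus_commute: "cnorm (x - y::'a::cinner_space) = cnorm (y - x)"
  using cnorm_scaleC[of "-1" "x - y"] by (simp add: scaleC_minus_one)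

lemma cmod_cinner_le: "cmod (cinner (x::'a::cinner_space) y) \<le> cnorm x * cnorm y"
proof -
  have "(cmod (cinner x y))\<^sup>2 \<le> (cnorm x * cnorm y)\<^sup>2"
    using cauchy_schwarz[of x y] by (simp add: power_mult_distrib cnorm_squared)
  then show ?thesis
    by (meson cnorm_nonneg mult_nonneg_nonneg power2_le_imp_le)
qed

lemma Re_cinner_le: "Re (cinner (x::'a::cinner_space) y) \<le> cnorm x * cnorm y"
  using cmod_cinner_le complex_Re_le_cmod order_trans by blast

lemma cnorm_triangle: "cnorm (x + y::'a::cinner_space) \<le> cnorm x + cnorm y"
proof -
  have "(cnorm (x + y))\<^sup>2 \<le> (cnorm x + cnorm y)\<^sup>2"
    using Re_cinner_le[of x y] by (simp add: cnorm_squared sqnorm_add power2_sum)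
  then show ?thesis
    by (meson add_nonneg_nonneg cnorm_nonneg power2_le_imp_le)
qed

lemma parallelogram_law:
  "sqnorm (x - y::'a::cinner_space) + sqnorm (x + y) = 2 * sqnorm x + 2 * sqnorm y"
  by (simp add: sqnorm_add sqnorm_diff)

lemma sqnorm_minus_commute: "sqnorm (x - y::'a::cinner_space) = sqnorm (y - x)"
  by (simp flip: cnorm_squared add: cnorm_minus_commute)

lemma abs_cnorm_diff_le: "\<bar>cnorm x - cnorm y\<bar> \<le> cnorm (x - y::'a::cinner_space)"
proof -
  have "cnorm x \<le> cnorm (x - y) + cnorm y" using cnorm_triangle[of "x - y" y] by simp
  moreover have "cnorm y \<le> cnorm (x - y) + cnorm x"
    using cnorm_triangle[of "y - x" x] cnorm_minus_commute[of x y] by simp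
  ultimately show ?thesis by linarith
qed

definition converges_to :: "(nat \<Rightarrow> 'a::cinner_space) \<Rightarrow> 'a \<Rightarrow> bool" where
  "converges_to X L \<longleftrightarrow> (\<lambda>n. cnorm (X n - L)) \<longlonglongrightarrow> 0"

definition cCauchy :: "(nat \<Rightarrow> 'a::cinner_space) \<Rightarrow> bool" where
  "cCauchy X \<longleftrightarrow> (\<forall>e>0. \<exists>N. \<forall>m\<ge>N. \<forall>n\<ge>N. cnorm (X m - X n) < e)"

lemma LIMSEQ_zero_by_bound:
  "(\<And>n. norm (f n) \<le> g n) \<Longrightarrow> g \<longlonglongrightarrow> (0::real) \<Longrightarrow> f \<longlonglongrightarrow> 0"
  by (erule tendsto_0_le[where K = 1], rule always_eventually)
    (metis abs_ge_self mult_1_right order_trans real_norm_def)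

lemma cCauchy_converges:
  fixes X :: "nat \<Rightarrow> 'a::chilbert"
  assumes "cCauchy X"
  shows "\<exists>L. converges_to X L"
proof -
  obtain L where "\<forall>e>0. \<exists>N. \<forall>n\<ge>N. cnorm (X n - L) < e"
    using cauchy_complete[of X] assms unfolding cCauchy_def cnorm_def by blast
  then have "converges_to X L"
    unfolding converges_to_def LIMSEQ_iff by (simp add: cnorm_nonneg)
  then show ?thesis ..
qed

lemma converges_to_cCauchy:
  assumes "converges_to X L"
  shows "cCauchy X"
  unfolding cCauchy_def
proof (intro allI impI)
  fix e :: real
  assume "e > 0"
  then obtain N where N: "\<forall>n\<ge>N. cnorm (X n - L) < e / 2"
    using LIMSEQ_D[OF assms[unfolded converges_to_def], of "e / 2"] by (auto simp: cnorm_nonneg)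
  have "cnorm (X m - X n) \<le> cnorm (X m - L) + cnorm (X n - L)" for m n
    using cnorm_triangle[of "X m - L" "L - X n"] cnorm_minus_commute[of L "X n"] by simp
  then have "cnorm (X m - X n) < e" if "m \<ge> N" "n \<ge> N" for m n
    using N that by (smt (verit) field_sum_of_halves)
  then show "\<exists>N. \<forall>m\<ge>N. \<forall>n\<ge>N. cnorm (X m - X n) < e" by blast
qed

lemma converges_to_by_bound:
  "(\<And>n. cnorm (Y n - M) \<le> c * cnorm (X n - L)) \<Longrightarrow> converges_to X L \<Longrightarrow> converges_to Y M"
  unfolding converges_to_def
  by (rule LIMSEQ_zero_by_bound[where g = "\<lambda>n. c * cnorm (X n - L)"])
    (simp_all add: cnorm_nonneg tendsto_mult_right_zero)

lemma converges_to_add: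
  "converges_to X L \<Longrightarrow> converges_to Y M \<Longrightarrow> converges_to (\<lambda>n. X n + Y n) (L + M)"
  unfolding converges_to_def
  by (rule LIMSEQ_zero_by_bound[where g = "\<lambda>n. cnorm (X n - L) + cnorm (Y n - M)"])
    (simp_all add: cnorm_nonneg tendsto_add_zero add_diff_add cnorm_triangle)

lemma converges_to_scaleC: "converges_to X L \<Longrightarrow> converges_to (\<lambda>n. a *\<^sub>C X n) (a *\<^sub>C L)"
  by (rule converges_to_by_bound[where c = "cmod a"]) (simp_all add: cnorm_scaleC flip: scaleC_diff_right)

lemma converges_to_cinner: "converges_to X L \<Longrightarrow> (\<lambda>n. cinner y (X n)) \<longlonglongrightarrow> cinner y L"
  unfolding converges_to_def
  by (rule LIM_zero_cancel, rule LIMSEQ_zero_by_bound[where g = "\<lambda>n. cnorm y * cnorm (X n - L)"])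
    (simp_all add: cmod_cinner_le tendsto_mult_right_zero flip: cinner_diff_right)

lemma converges_to_cnorm_dist:
  "converges_to X L \<Longrightarrow> (\<lambda>n. cnorm (\<psi> - X n)) \<longlonglongrightarrow> cnorm (\<psi> - L)"
  unfolding converges_to_def
  by (rule LIM_zero_cancel, rule LIMSEQ_zero_by_bound[where g = "\<lambda>n. cnorm (X n - L)"])
    (use abs_cnorm_diff_le[of "\<psi> - X _" "\<psi> - L"] cnorm_minus_commute[of L "X _"] in auto)

definition symmetric_operator :: "'a::cinner_space set \<Rightarrow> ('a \<Rightarrow> 'a) \<Rightarrow> bool" where
  "symmetric_operator D A \<longleftrightarrow> csubspace D \<and> clinear_on D A \<and>
     (\<forall>\<phi>\<in>D. \<forall>\<psi>\<in>D. cinner \<phi> (A \<psi>) = cinner (A \<phi>) \<psi>)"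

lemma self_adjoint_imp_symmetric: "self_adjoint D A \<Longrightarrow> symmetric_operator D A"
  by (simp add: self_adjoint_def symmetric_operator_def)

context
  fixes D :: "'a::cinner_space set" and A :: "'a \<Rightarrow> 'a"
  assumes sym: "symmetric_operator D A"
begin

lemma symmetric_add: "x \<in> D \<Longrightarrow> y \<in> D \<Longrightarrow> x + y \<in> D \<and> A (x + y) = A x + A y"
  using sym unfolding symmetric_operator_def csubspace_def clinear_on_def by blast

lemma symmetric_scaleC: "x \<in> D \<Longrightarrow> a *\<^sub>C x \<in> D \<and> A (a *\<^sub>C x) = a *\<^sub>C A x"
  using sym unfolding symmetric_operator_def csubspace_def clinear_on_def by blast

lemma symmetric_diff: "x \<in> D \<Longrightarrow> y \<in> D \<Longrightarrow> x - y \<in> D \<and> A (x - y) = A x - A y"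
  using symmetric_add[of x "(-1) *\<^sub>C y"] symmetric_scaleC[of y "-1"] by (simp add: scaleC_minus_one)

lemma symmetric_diff_scaleC:
  "x \<in> D \<Longrightarrow> y \<in> D \<Longrightarrow> x - a *\<^sub>C y \<in> D \<and> A (x - a *\<^sub>C y) = A x - a *\<^sub>C A y"
  using symmetric_diff[of x "a *\<^sub>C y"] symmetric_scaleC[of y a] by simp

lemma symmetric_zero: "0 \<in> D \<and> A 0 = 0"
  using sym symmetric_diff[of 0 0] unfolding symmetric_operator_def csubspace_def by simp

lemma symmetric_cinner: "x \<in> D \<Longrightarrow> y \<in> D \<Longrightarrow> cinner x (A y) = cinner (A x) y"
  using sym unfolding symmetric_operator_def by blast

lemma symmetric_Im_cinner_self: "x \<in> D \<Longrightarrow> Im (cinner x (A x)) = 0"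
  using arg_cong[OF symmetric_cinner[of x x], of Im] cinner_conj_sym[of "A x" x]
  by (simp del: cnj_cinner)

lemma symmetric_shift_lower_bound:
  assumes "x \<in> D"
  shows "\<bar>Im z\<bar> * cnorm x \<le> cnorm (A x - z *\<^sub>C x)"
proof (cases "x = 0")
  case False
  \<comment> \<open>\<open>Im (x, (A - z) x) = - Im z \<parallel>x\<parallel>\<^sup>2\<close> because \<open>(x, A x)\<close> is real\<close>
  have "Im (cinner x (A x - z *\<^sub>C x)) = - Im z * sqnorm x"
    using symmetric_Im_cinner_self[OF assms] by (simp add: cinner_simps)
  then have "\<bar>Im z\<bar> * (cnorm x * cnorm x) \<le> cnorm x * cnorm (A x - z *\<^sub>C x)"
    using abs_Im_le_cmod[of "cinner x (A x - z *\<^sub>C x)"] cmod_cinner_le[of x "A x - z *\<^sub>C x"]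
    by (simp add: abs_mult flip: cnorm_squared power2_eq_square)
  then show ?thesis
    using cnorm_pos[OF False] by (simp add: mult.left_commute)
qed (simp add: symmetric_zero)

lemma symmetric_shift_inj:
  assumes "Im z \<noteq> 0" "x \<in> D" "y \<in> D" "A x - z *\<^sub>C x = A y - z *\<^sub>C y"
  shows "x = y"
proof -
  have "\<bar>Im z\<bar> * cnorm (x - y) \<le> 0"
    using symmetric_shift_lower_bound[of "x - y" z] symmetric_diff[of x y] assms(2-4)
    by (simp add: scaleC_diff_right algebra_simps)
  then show ?thesis
    using assms(1) cnorm_pos[of "x - y"] by (auto simp: mult_le_0_iff)
qed

lemma symmetric_resolvent_eqI:
  assumes "Im z \<noteq> 0" "\<phi> \<in> D" "A \<phi> - z *\<^sub>C \<phi> = \<psi>"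
  shows "resolvent D A z \<psi> = \<phi>"
  unfolding resolvent_def
  using assms symmetric_shift_inj[OF assms(1)] by (intro the_equality) auto

end

section \<open>Nearest points\<close>

definition midpoint_convex :: "'a::cvector set \<Rightarrow> bool" where
  "midpoint_convex C \<longleftrightarrow> (\<forall>x\<in>C. \<forall>y\<in>C. (1/2) *\<^sub>C (x + y) \<in> C)"

definition sequentially_closed :: "'a::cinner_space set \<Rightarrow> bool" where
  "sequentially_closed C \<longleftrightarrow> (\<forall>X L. (\<forall>n. X n \<in> C) \<longrightarrow> converges_to X L \<longrightarrow> L \<in> C)"

lemma minimizing_sequence_cCauchy:
  fixes \<psi> :: "'a::cinner_space"
  assumes convex: "midpoint_convex C" and r: "\<And>n. r n \<in> C"
    and lower: "\<And>x. x \<in> C \<Longrightarrow> d \<le> sqnorm (\<psi> - x)"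
    and near: "\<And>n. sqnorm (\<psi> - r n) < d + inverse (real (Suc n))"
  shows "cCauchy r"
proof -
  have gap: "sqnorm (r m - r n) < 2 * inverse (real (Suc m)) + 2 * inverse (real (Suc n))" for m n
  proof -
    have "(\<psi> - r m) + (\<psi> - r n) = 2 *\<^sub>C (\<psi> - (1/2) *\<^sub>C (r m + r n))"
      using scaleC_add_left[of 1 1 \<psi>] by (simp add: scaleC_diff_right scaleC_scaleC scaleC_one)
    then have "4 * d \<le> sqnorm ((\<psi> - r m) + (\<psi> - r n))"
      using lower[of "(1/2) *\<^sub>C (r m + r n)"] convex r
      unfolding midpoint_convex_def by (simp add: sqnorm_scaleC)
    moreover have "sqnorm ((\<psi> - r m) - (\<psi> - r n)) = sqnorm (r m - r n)"
      using sqnorm_minus_commute[of "r n" "r m"] by simp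
    ultimately show ?thesis
      using parallelogram_law[of "\<psi> - r m" "\<psi> - r n"] near[of m] near[of n] by linarith
  qed
  show ?thesis
    unfolding cCauchy_def
  proof (intro allI impI)
    fix e :: real
    assume "e > 0"
    then obtain N where N: "inverse (real (Suc N)) < e\<^sup>2 / 4"
      by (metis reals_Archimedean divide_pos_pos zero_less_numeral zero_less_power)
    have "sqnorm (r m - r n) < e\<^sup>2" if "m \<ge> N" "n \<ge> N" for m n
    proof -
      have "inverse (real (Suc m)) \<le> inverse (real (Suc N))"
        "inverse (real (Suc n)) \<le> inverse (real (Suc N))"
        using that by (simp_all add: le_imp_inverse_le)
      then show ?thesis using gap[of m n] N by linarith
    qed
    then have "cnorm (r m - r n) < e" if "m \<ge> N" "n \<ge> N" for m n
      using that \<open>e > 0\<close> by (metis cnorm_squared power2_less_imp_less less_imp_le)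
    then show "\<exists>N. \<forall>m\<ge>N. \<forall>n\<ge>N. cnorm (r m - r n) < e" by blast
  qed
qed

lemma nearest_point_exists:
  fixes \<psi> :: "'a::chilbert"
  assumes "C \<noteq> {}" "midpoint_convex C" "sequentially_closed C"
  shows "\<exists>v\<in>C. \<forall>x\<in>C. sqnorm (\<psi> - v) \<le> sqnorm (\<psi> - x)"
proof -
  define d where "d = Inf ((\<lambda>x. sqnorm (\<psi> - x)) ` C)"
  have lower: "d \<le> sqnorm (\<psi> - x)" if "x \<in> C" for x
    unfolding d_def using that by (intro cInf_lower) (auto intro!: bdd_belowI[of _ 0] simp: cinner_pos)
  have "\<exists>x\<in>C. sqnorm (\<psi> - x) < d + inverse (real (Suc n))" for n
    using cInf_lessD[of "(\<lambda>x. sqnorm (\<psi> - x)) ` C" "d + inverse (real (Suc n))"] assms(1)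
    unfolding d_def by auto
  then obtain r where r: "\<And>n. r n \<in> C" "\<And>n. sqnorm (\<psi> - r n) < d + inverse (real (Suc n))"
    by metis
  obtain L where L: "converges_to r L"
    using cCauchy_converges minimizing_sequence_cCauchy[OF assms(2) r(1) lower r(2)] by blast
  have "L \<in> C"
    using assms(3) r(1) L unfolding sequentially_closed_def by blast
  moreover have "sqnorm (\<psi> - L) \<le> d"
  proof (rule LIMSEQ_le)
    show "(\<lambda>n. sqnorm (\<psi> - r n)) \<longlonglongrightarrow> sqnorm (\<psi> - L)"
      using tendsto_power[OF converges_to_cnorm_dist[OF L], where n = 2] by (simp add: cnorm_squared)
    show "(\<lambda>n. d + inverse (real (Suc n))) \<longlonglongrightarrow> d"
      using tendsto_add[OF tendsto_const LIMSEQ_inverse_real_of_nat, of d] by simp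
    show "\<exists>N. \<forall>n\<ge>N. sqnorm (\<psi> - r n) \<le> d + inverse (real (Suc n))"
      using r(2) less_imp_le by blast
  qed
  ultimately show ?thesis
    using lower order_trans by blast
qed

lemma orthogonal_if_nearest:
  fixes w s :: "'a::cinner_space"
  assumes nearest: "\<And>t. sqnorm w \<le> sqnorm (w - t *\<^sub>C s)"
  shows "cinner w s = 0"
proof (rule ccontr)
  define c where "c = cinner w s"
  assume "cinner w s \<noteq> 0"
  then have c: "0 < (cmod c)\<^sup>2" by (simp add: c_def)
  define k where "k = inverse (sqnorm s + 1)"
  have k: "0 < k" "k * sqnorm s < 1"
    using cinner_pos[of s] by (simp_all add: k_def field_simps)
  \<comment> \<open>test minimality against \<open>t = k cnj c\<close>\<close>
  have "Re (cinner w ((k * cnj c) *\<^sub>C s)) = k * (cmod c)\<^sup>2"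
    unfolding cmod_power2 by (simp add: cinner_scaleC_right power2_eq_square algebra_simps flip: c_def)
  then have "sqnorm (w - (k * cnj c) *\<^sub>C s) = sqnorm w + k\<^sup>2 * (cmod c)\<^sup>2 * sqnorm s - 2 * k * (cmod c)\<^sup>2"
    using k by (simp add: sqnorm_diff sqnorm_scaleC norm_mult power_mult_distrib)
  then have "k * (cmod c)\<^sup>2 * 2 \<le> k * (cmod c)\<^sup>2 * (k * sqnorm s)"
    using nearest[of "k * cnj c"] by (simp add: power2_eq_square algebra_simps)
  then have "2 \<le> k * sqnorm s"
    using k c by simp
  with k show False by simp
qed

section \<open>Resolvents of self-adjoint operators\<close>

lemma dense_orthogonal_eq_zero:
  assumes "dense_set D" "\<And>\<phi>. \<phi> \<in> D \<Longrightarrow> cinner x \<phi> = 0"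
  shows "x = 0"
proof (rule ccontr)
  assume "x \<noteq> 0"
  then have pos: "cnorm x > 0" by (rule cnorm_pos)
  obtain y where y: "y \<in> D" "cnorm (x - y) < cnorm x / 2"
    using assms(1) pos unfolding dense_set_def by (meson half_gt_zero)
  have "(cnorm x)\<^sup>2 = Re (cinner x (x - y))"
    using assms(2)[OF y(1)] by (simp add: cinner_diff_right cnorm_squared)
  also have "\<dots> \<le> cnorm x * cnorm (x - y)" by (rule Re_cinner_le)
  also have "\<dots> < cnorm x * (cnorm x / 2)" using y(2) pos by simp
  finally show False using pos by (simp add: power2_eq_square)
qed

lemma self_adjoint_closed_graph:
  assumes sa: "self_adjoint D A" and f: "\<And>n. f n \<in> D"
    and lim: "converges_to f \<phi>" and lim_A: "converges_to (\<lambda>n. A (f n)) \<eta>"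
  shows "\<phi> \<in> D \<and> A \<phi> = \<eta>"
proof -
  note sym = self_adjoint_imp_symmetric[OF sa]
  have dense: "dense_set D"
    using sa unfolding self_adjoint_def by blast
  have adjoint: "cinner \<phi> (A \<psi>) = cinner \<eta> \<psi>" if "\<psi> \<in> D" for \<psi>
  proof -
    have "(\<lambda>n. cinner (A \<psi>) (f n)) \<longlonglongrightarrow> cinner (A \<psi>) \<phi>"
      by (rule converges_to_cinner[OF lim])
    moreover have "(\<lambda>n. cinner (A \<psi>) (f n)) \<longlonglongrightarrow> cinner \<psi> \<eta>"
      using converges_to_cinner[OF lim_A, of \<psi>] symmetric_cinner[OF sym that f] by simp
    ultimately have "cinner (A \<psi>) \<phi> = cinner \<psi> \<eta>" by (rule LIMSEQ_unique)
    then show ?thesis by (metis cnj_cinner)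
  qed
  then have "\<phi> \<in> D"
    using sa unfolding self_adjoint_def adjoint_domain_def by blast
  moreover have "A \<phi> - \<eta> = 0"
    by (rule dense_orthogonal_eq_zero[OF dense])
      (simp add: cinner_diff_left adjoint symmetric_cinner[OF sym \<open>\<phi> \<in> D\<close>, symmetric])
  ultimately show ?thesis by simp
qed

lemma self_adjoint_shift_range_orthogonal:
  assumes sa: "self_adjoint D A" and z: "Im z \<noteq> 0"
    and orth: "\<And>x. x \<in> D \<Longrightarrow> cinner w (A x - z *\<^sub>C x) = 0"
  shows "w = 0"
proof -
  note sym = self_adjoint_imp_symmetric[OF sa]
  have dense: "dense_set D"
    using sa unfolding self_adjoint_def by blast
  have adjoint: "cinner w (A x) = cinner (cnj z *\<^sub>C w) x" if "x \<in> D" for x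
    using orth[OF that] by (simp add: cinner_simps)
  then have w: "w \<in> D"
    using sa unfolding self_adjoint_def adjoint_domain_def by blast
  \<comment> \<open>\<open>w\<close> is an eigenvector of \<open>A\<close> with the non-real eigenvalue \<open>cnj z\<close>\<close>
  have "A w - cnj z *\<^sub>C w = 0"
    by (rule dense_orthogonal_eq_zero[OF dense])
      (simp add: cinner_diff_left adjoint symmetric_cinner[OF sym w, symmetric])
  then have "cinner w (A w) = cnj z * cinner w w"
    by (simp add: cinner_scaleC_right flip: cinner_diff_right)
  then have "Im z * sqnorm w = 0"
    using symmetric_Im_cinner_self[OF sym w] by simp
  then show ?thesis
    using z sqnorm_eq_zero_iff by (metis mult_eq_0_iff)
qed

lemma self_adjoint_shift_range_closed:
  fixes A :: "'a::chilbert \<Rightarrow> 'a"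
  assumes sa: "self_adjoint D A" and z: "Im z \<noteq> 0"
  shows "sequentially_closed ((\<lambda>\<phi>. A \<phi> - z *\<^sub>C \<phi>) ` D)"
  unfolding sequentially_closed_def
proof (intro allI impI)
  fix X L
  assume "\<forall>n. X n \<in> (\<lambda>\<phi>. A \<phi> - z *\<^sub>C \<phi>) ` D" and L: "converges_to X L"
  then have "\<forall>n. \<exists>\<phi>. \<phi> \<in> D \<and> X n = A \<phi> - z *\<^sub>C \<phi>" by blast
  then obtain f where f: "\<And>n. f n \<in> D" "\<And>n. X n = A (f n) - z *\<^sub>C f n"
    by metis
  note sym = self_adjoint_imp_symmetric[OF sa]
  have bound: "\<bar>Im z\<bar> * cnorm (f m - f n) \<le> cnorm (X m - X n)" for m n
    using symmetric_shift_lower_bound[OF sym, of "f m - f n" z] symmetric_diff[OF sym f(1) f(1)]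
    by (simp add: f(2) scaleC_diff_right algebra_simps)
  have "cCauchy f"
    unfolding cCauchy_def
  proof (intro allI impI)
    fix e :: real
    assume "e > 0"
    then obtain N where N: "\<forall>m\<ge>N. \<forall>n\<ge>N. cnorm (X m - X n) < \<bar>Im z\<bar> * e"
      using converges_to_cCauchy[OF L] z \<open>e > 0\<close> unfolding cCauchy_def
      by (metis mult_pos_pos zero_less_abs_iff)
    then have "cnorm (f m - f n) < e" if "m \<ge> N" "n \<ge> N" for m n
      using bound[of m n] that z by (smt (verit) mult_le_cancel_left_pos zero_less_abs_iff)
    then show "\<exists>N. \<forall>m\<ge>N. \<forall>n\<ge>N. cnorm (f m - f n) < e" by blast
  qed
  then obtain \<phi> where \<phi>: "converges_to f \<phi>"
    using cCauchy_converges by blast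
  have "converges_to (\<lambda>n. A (f n)) (L + z *\<^sub>C \<phi>)"
    using converges_to_add[OF L converges_to_scaleC[OF \<phi>, of z]] by (simp add: f(2))
  then have "\<phi> \<in> D" "L = A \<phi> - z *\<^sub>C \<phi>"
    using self_adjoint_closed_graph[OF sa f(1) \<phi>] by auto
  then show "L \<in> (\<lambda>\<phi>. A \<phi> - z *\<^sub>C \<phi>) ` D" by blast
qed

lemma self_adjoint_shift_surj:
  fixes A :: "'a::chilbert \<Rightarrow> 'a"
  assumes sa: "self_adjoint D A" and z: "Im z \<noteq> 0"
  shows "\<exists>\<phi>\<in>D. A \<phi> - z *\<^sub>C \<phi> = \<psi>"
proof -
  note sym = self_adjoint_imp_symmetric[OF sa]
  let ?C = "(\<lambda>\<phi>. A \<phi> - z *\<^sub>C \<phi>) ` D"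
  have combination: "a *\<^sub>C (A \<phi> - z *\<^sub>C \<phi>) + b *\<^sub>C (A \<phi>' - z *\<^sub>C \<phi>') \<in> ?C"
    if "\<phi> \<in> D" "\<phi>' \<in> D" for \<phi> \<phi>' a b
  proof
    show "a *\<^sub>C \<phi> + b *\<^sub>C \<phi>' \<in> D"
      using that symmetric_add[OF sym] symmetric_scaleC[OF sym] by blast
    show "a *\<^sub>C (A \<phi> - z *\<^sub>C \<phi>) + b *\<^sub>C (A \<phi>' - z *\<^sub>C \<phi>')
        = A (a *\<^sub>C \<phi> + b *\<^sub>C \<phi>') - z *\<^sub>C (a *\<^sub>C \<phi> + b *\<^sub>C \<phi>')"
      using that symmetric_add[OF sym] symmetric_scaleC[OF sym]
      by (simp add: scaleC_add_right scaleC_diff_right scaleC_scaleC mult.commute algebra_simps)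
  qed
  have "midpoint_convex ?C"
    unfolding midpoint_convex_def using combination[where a = "1/2" and b = "1/2"]
    by (auto simp: scaleC_add_right)
  moreover have "?C \<noteq> {}"
    using symmetric_zero[OF sym] by blast
  ultimately obtain \<phi> where \<phi>: "\<phi> \<in> D"
    and nearest: "\<And>x. x \<in> ?C \<Longrightarrow> sqnorm (\<psi> - (A \<phi> - z *\<^sub>C \<phi>)) \<le> sqnorm (\<psi> - x)"
    using nearest_point_exists[OF _ _ self_adjoint_shift_range_closed[OF sa z], of \<psi>] by blast
  have "cinner (\<psi> - (A \<phi> - z *\<^sub>C \<phi>)) (A x - z *\<^sub>C x) = 0" if "x \<in> D" for x
  proof (rule orthogonal_if_nearest)
    fix t
    show "sqnorm (\<psi> - (A \<phi> - z *\<^sub>C \<phi>)) \<le> sqnorm (\<psi> - (A \<phi> - z *\<^sub>C \<phi>) - t *\<^sub>C (A x - z *\<^sub>C x))"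
      using nearest[OF combination[OF \<phi> that, of 1 t]] by (simp add: scaleC_one diff_diff_eq)
  qed
  then have "\<psi> - (A \<phi> - z *\<^sub>C \<phi>) = 0"
    by (rule self_adjoint_shift_range_orthogonal[OF sa z])
  then show ?thesis using \<phi> by auto
qed

lemma self_adjoint_resolvent:
  fixes A :: "'a::chilbert \<Rightarrow> 'a"
  assumes sa: "self_adjoint D A" and z: "Im z \<noteq> 0"
  shows "resolvent D A z \<psi> \<in> D" "A (resolvent D A z \<psi>) - z *\<^sub>C resolvent D A z \<psi> = \<psi>"
  using self_adjoint_shift_surj[OF sa z, of \<psi>]
    symmetric_resolvent_eqI[OF self_adjoint_imp_symmetric[OF sa] z] by auto

lemma cramer_rule_2x2:
  fixes a11 a12 a21 a22 e1 e2 :: "'a::field"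
  assumes "a11 * a22 - a12 * a21 = \<Delta>" "\<Delta> \<noteq> 0"
  shows "a11 * ((e1 * a22 - a12 * e2) / \<Delta>) + a12 * ((a11 * e2 - a21 * e1) / \<Delta>) = e1"
    and "a21 * ((e1 * a22 - a12 * e2) / \<Delta>) + a22 * ((a11 * e2 - a21 * e1) / \<Delta>) = e2"
proof -
  have "a11 * (e1 * a22 - a12 * e2) + a12 * (a11 * e2 - a21 * e1) = e1 * \<Delta>"
    "a21 * (e1 * a22 - a12 * e2) + a22 * (a11 * e2 - a21 * e1) = e2 * \<Delta>"
    by (simp_all add: assms(1)[symmetric] algebra_simps)
  then show "a11 * ((e1 * a22 - a12 * e2) / \<Delta>) + a12 * ((a11 * e2 - a21 * e1) / \<Delta>) = e1"
    and "a21 * ((e1 * a22 - a12 * e2) / \<Delta>) + a22 * ((a11 * e2 - a21 * e1) / \<Delta>) = e2"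
    using assms(2) by (simp_all add: times_divide_eq_right flip: add_divide_distrib)
qed

lemma singular_2x2_kernel:
  fixes a11 a12 a21 a22 :: "'a::field"
  assumes "a11 * a22 - a12 * a21 = 0"
  obtains x y where "x \<noteq> 0 \<or> y \<noteq> 0" "a11 * x + a12 * y = 0" "a21 * x + a22 * y = 0"
proof (cases "a11 = 0 \<and> a12 = 0")
  case True
  show ?thesis
  proof (cases "a21 = 0 \<and> a22 = 0")
    case False
    then show ?thesis using True by (intro that[of a22 "- a21"]) (auto simp: algebra_simps)
  qed (use True that[of 1 0] in auto)
next
  case False
  then show ?thesis using assms by (intro that[of a12 "- a11"]) (auto simp: algebra_simps)
qed

section \<open>The coupled operator\<close>

lemma cinner_triple:
  "cinner (a::'l::cinner_space, b::'s::cinner_space, c::'r::cinner_space) (x, y, w)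
     = cinner a x + (cinner b y + cinner c w)"
  by (simp add: cinner_prod_def)

lemma scaleC_triple:
  "k *\<^sub>C (a::'l::cvector, b::'s::cvector, c::'r::cvector) = (k *\<^sub>C a, k *\<^sub>C b, k *\<^sub>C c)"
  by (simp add: scaleC_prod_def)

lemma Hlamnu_triple:
  "Hlamnu Hl HS Hr \<chi>l \<chi>r \<delta>l \<delta>r lam nu (u, v, w) =
    (Hl u + (complex_of_real lam * cinner \<delta>l v) *\<^sub>C \<chi>l,
     HS v + (complex_of_real lam * cinner \<chi>l u) *\<^sub>C \<delta>l + (complex_of_real nu * cinner \<chi>r w) *\<^sub>C \<delta>r,
     Hr w + (complex_of_real nu * cinner \<delta>r v) *\<^sub>C \<chi>r)"
  by (simp add: Hlamnu_def H0op_def inl3_def ins3_def inr3_def cinner_triple scaleC_triple scaleC_scaleC)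

lemma Hlamnu_symmetric:
  assumes l: "symmetric_operator Dl Hl" and s: "symmetric_operator DS HS"
    and r: "symmetric_operator Dr Hr"
  shows "symmetric_operator (dom0 Dl DS Dr) (Hlamnu Hl HS Hr \<chi>l \<chi>r \<delta>l \<delta>r lam nu)"
  unfolding symmetric_operator_def csubspace_def clinear_on_def
proof (intro conjI ballI allI)
  show "0 \<in> dom0 Dl DS Dr"
    using symmetric_zero[OF l] symmetric_zero[OF s] symmetric_zero[OF r]
    by (simp add: dom0_def zero_prod_def)
next
  fix x y a assume "x \<in> dom0 Dl DS Dr" "y \<in> dom0 Dl DS Dr"
  then obtain u v w u' v' w' where xy: "x = (u, v, w)" "y = (u', v', w')"
    and mem: "u \<in> Dl" "v \<in> DS" "w \<in> Dr" "u' \<in> Dl" "v' \<in> DS" "w' \<in> Dr"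
    by (auto simp: dom0_def)
  show "x + y \<in> dom0 Dl DS Dr" "a *\<^sub>C x \<in> dom0 Dl DS Dr"
    using xy mem symmetric_add[OF l] symmetric_add[OF s] symmetric_add[OF r]
      symmetric_scaleC[OF l] symmetric_scaleC[OF s] symmetric_scaleC[OF r]
    by (simp_all add: dom0_def scaleC_triple)
  show "Hlamnu Hl HS Hr \<chi>l \<chi>r \<delta>l \<delta>r lam nu (x + y)
      = Hlamnu Hl HS Hr \<chi>l \<chi>r \<delta>l \<delta>r lam nu x + Hlamnu Hl HS Hr \<chi>l \<chi>r \<delta>l \<delta>r lam nu y"
    using xy mem symmetric_add[OF l] symmetric_add[OF s] symmetric_add[OF r]
    by (simp add: Hlamnu_triple cinner_simps scaleC_add_left distrib_left algebra_simps)
  show "Hlamnu Hl HS Hr \<chi>l \<chi>r \<delta>l \<delta>r lam nu (a *\<^sub>C x)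
      = a *\<^sub>C Hlamnu Hl HS Hr \<chi>l \<chi>r \<delta>l \<delta>r lam nu x"
    using xy mem symmetric_scaleC[OF l] symmetric_scaleC[OF s] symmetric_scaleC[OF r]
    by (simp add: Hlamnu_triple scaleC_triple cinner_simps scaleC_add_right scaleC_scaleC ac_simps)
  show "cinner x (Hlamnu Hl HS Hr \<chi>l \<chi>r \<delta>l \<delta>r lam nu y)
      = cinner (Hlamnu Hl HS Hr \<chi>l \<chi>r \<delta>l \<delta>r lam nu x) y"
    using xy mem symmetric_cinner[OF l] symmetric_cinner[OF s] symmetric_cinner[OF r]
    by (simp add: Hlamnu_triple cinner_triple cinner_simps algebra_simps)
qed

locale two_lead_model =
  fixes Hl :: "'l::chilbert \<Rightarrow> 'l" and Dl :: "'l set"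
    and HS :: "'s::chilbert \<Rightarrow> 's" and DS :: "'s set"
    and Hr :: "'r::chilbert \<Rightarrow> 'r" and Dr :: "'r set"
    and \<chi>l :: 'l and \<chi>r :: 'r and \<delta>l \<delta>r :: 's and z :: complex
  assumes sa_l: "self_adjoint Dl Hl" and sa_S: "self_adjoint DS HS" and sa_r: "self_adjoint Dr Hr"
    and nonreal: "Im z \<noteq> 0"
begin

abbreviation R :: "real \<Rightarrow> real \<Rightarrow> 'l \<times> 's \<times> 'r \<Rightarrow> 'l \<times> 's \<times> 'r" where
  "R lam nu \<equiv> resolvent (dom0 Dl DS Dr) (Hlamnu Hl HS Hr \<chi>l \<chi>r \<delta>l \<delta>r lam nu) z"

abbreviation "Rl \<equiv> resolvent Dl Hl z"
abbreviation "RS \<equiv> resolvent DS HS z"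
abbreviation "Rr \<equiv> resolvent Dr Hr z"

text \<open>The values of the free Green function \<open>G\<^sub>0\<close> at \<open>z\<close>; e.g.\ \<open>slr = G\<^sub>0(\<delta>\<^sub>l, \<delta>\<^sub>r, z)\<close>.\<close>
abbreviation "gl \<equiv> cinner \<chi>l (Rl \<chi>l)"
abbreviation "gr \<equiv> cinner \<chi>r (Rr \<chi>r)"
abbreviation "sll \<equiv> cinner \<delta>l (RS \<delta>l)"
abbreviation "slr \<equiv> cinner \<delta>l (RS \<delta>r)"
abbreviation "srl \<equiv> cinner \<delta>r (RS \<delta>l)"
abbreviation "srr \<equiv> cinner \<delta>r (RS \<delta>r)"

definition coupling_det :: "real \<Rightarrow> real \<Rightarrow> complex" where
  "coupling_det lam nu =
     (1 - (complex_of_real nu)\<^sup>2 * gr * srr) * (1 - (complex_of_real lam)\<^sup>2 * gl * sll)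
     - (complex_of_real nu)\<^sup>2 * (complex_of_real lam)\<^sup>2 * gr * gl * slr * srl"

lemmas sym_l = self_adjoint_imp_symmetric[OF sa_l]
lemmas sym_S = self_adjoint_imp_symmetric[OF sa_S]
lemmas sym_r = self_adjoint_imp_symmetric[OF sa_r]

lemmas resolvent_l = self_adjoint_resolvent[OF sa_l nonreal]
lemmas resolvent_S = self_adjoint_resolvent[OF sa_S nonreal]
lemmas resolvent_r = self_adjoint_resolvent[OF sa_r nonreal]

lemma resolvent_zero: "Rl 0 = 0" "RS 0 = 0" "Rr 0 = 0"
  using symmetric_resolvent_eqI[OF _ nonreal, of _ _ 0 0] sym_l sym_S sym_r symmetric_zero
  by auto

lemma R_eqI:
  "\<phi> \<in> dom0 Dl DS Dr \<Longrightarrow> Hlamnu Hl HS Hr \<chi>l \<chi>r \<delta>l \<delta>r lam nu \<phi> - z *\<^sub>C \<phi> = \<psi> \<Longrightarrow> R lam nu \<psi> = \<phi>"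
  by (rule symmetric_resolvent_eqI[OF Hlamnu_symmetric[OF sym_l sym_S sym_r] nonreal])

lemma R_uncoupled: "R 0 0 (x, y, w) = (Rl x, RS y, Rr w)"
  using resolvent_l[of x] resolvent_S[of y] resolvent_r[of w]
  by (intro R_eqI) (simp_all add: dom0_def Hlamnu_triple scaleC_triple)

lemma resolvent_eq:
  "Hl (Rl x) = x + z *\<^sub>C Rl x" "HS (RS y) = y + z *\<^sub>C RS y" "Hr (Rr w) = w + z *\<^sub>C Rr w"
  using resolvent_l(2)[of x] resolvent_S(2)[of y] resolvent_r(2)[of w] by (simp_all add: diff_eq_eq)

lemma R_ansatz:
  fixes lam nu :: real
  defines "L \<equiv> complex_of_real lam" and "M \<equiv> complex_of_real nu"
  assumes a: "a = cinner \<chi>l (Rl \<psi>1) - L * gl * b"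
    and c: "c = cinner \<chi>r (Rr \<psi>3) - M * gr * d"
    and b: "b = cinner \<delta>l (RS \<psi>2) - L * a * sll - M * c * slr"
    and d: "d = cinner \<delta>r (RS \<psi>2) - L * a * srl - M * c * srr"
  shows "cinner \<chi>l (fst (R lam nu (\<psi>1, \<psi>2, \<psi>3))) = a"
    and "cinner \<delta>l (fst (snd (R lam nu (\<psi>1, \<psi>2, \<psi>3)))) = b"
    and "cinner \<delta>r (fst (snd (R lam nu (\<psi>1, \<psi>2, \<psi>3)))) = d"
proof -
  define u where "u = Rl \<psi>1 - (L * b) *\<^sub>C Rl \<chi>l"
  define v where "v = RS \<psi>2 - (L * a) *\<^sub>C RS \<delta>l - (M * c) *\<^sub>C RS \<delta>r"
  define w where "w = Rr \<psi>3 - (M * d) *\<^sub>C Rr \<chi>r"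
  have "cinner \<chi>l u = a" using a by (simp add: u_def cinner_simps algebra_simps)
  moreover have "cinner \<delta>l v = b" using b by (simp add: v_def cinner_simps algebra_simps)
  moreover have "cinner \<delta>r v = d" using d by (simp add: v_def cinner_simps algebra_simps)
  moreover have "cinner \<chi>r w = c" using c by (simp add: w_def cinner_simps algebra_simps)
  ultimately have coords: "cinner \<chi>l u = a" "cinner \<delta>l v = b" "cinner \<delta>r v = d" "cinner \<chi>r w = c"
    .
  have "u \<in> Dl \<and> Hl u = Hl (Rl \<psi>1) - (L * b) *\<^sub>C Hl (Rl \<chi>l)"
    unfolding u_def by (intro symmetric_diff_scaleC[OF sym_l] resolvent_l(1))
  then have u: "u \<in> Dl" "Hl u = \<psi>1 + z *\<^sub>C u - (L * b) *\<^sub>C \<chi>l"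
    by (simp_all add: resolvent_eq u_def scaleC_add_right scaleC_diff_right scaleC_scaleC algebra_simps)
  have "v \<in> DS \<and> HS v = HS (RS \<psi>2) - (L * a) *\<^sub>C HS (RS \<delta>l) - (M * c) *\<^sub>C HS (RS \<delta>r)"
    using symmetric_diff_scaleC[OF sym_S] resolvent_S(1) unfolding v_def by metis
  then have v: "v \<in> DS" "HS v = \<psi>2 + z *\<^sub>C v - (L * a) *\<^sub>C \<delta>l - (M * c) *\<^sub>C \<delta>r"
    by (simp_all add: resolvent_eq v_def scaleC_add_right scaleC_diff_right scaleC_scaleC algebra_simps)
  have "w \<in> Dr \<and> Hr w = Hr (Rr \<psi>3) - (M * d) *\<^sub>C Hr (Rr \<chi>r)"
    unfolding w_def by (intro symmetric_diff_scaleC[OF sym_r] resolvent_r(1))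
  then have w: "w \<in> Dr" "Hr w = \<psi>3 + z *\<^sub>C w - (M * d) *\<^sub>C \<chi>r"
    by (simp_all add: resolvent_eq w_def scaleC_add_right scaleC_diff_right scaleC_scaleC algebra_simps)
  have "R lam nu (\<psi>1, \<psi>2, \<psi>3) = (u, v, w)"
    using u v w coords
    by (intro R_eqI) (simp_all add: dom0_def Hlamnu_triple scaleC_triple flip: L_def M_def)
  then show "cinner \<chi>l (fst (R lam nu (\<psi>1, \<psi>2, \<psi>3))) = a"
    and "cinner \<delta>l (fst (snd (R lam nu (\<psi>1, \<psi>2, \<psi>3)))) = b"
    and "cinner \<delta>r (fst (snd (R lam nu (\<psi>1, \<psi>2, \<psi>3)))) = d"
    using coords by simp_all
qed

lemma coupling_det_nonzero: "coupling_det lam nu \<noteq> 0"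
proof
  define L where "L = complex_of_real lam"
  define M where "M = complex_of_real nu"
  assume "coupling_det lam nu = 0"
  then have "(1 - L\<^sup>2 * gl * sll) * (1 - M\<^sup>2 * gr * srr) - (- (M\<^sup>2 * gr * slr)) * (- (L\<^sup>2 * gl * srl)) = 0"
    by (simp add: coupling_det_def L_def M_def algebra_simps)
  then obtain b d where nontrivial: "b \<noteq> 0 \<or> d \<noteq> 0"
    and kernel: "(1 - L\<^sup>2 * gl * sll) * b + (- (M\<^sup>2 * gr * slr)) * d = 0"
      "(- (L\<^sup>2 * gl * srl)) * b + (1 - M\<^sup>2 * gr * srr) * d = 0"
    by (rule singular_2x2_kernel)
  \<comment> \<open>a kernel vector yields a non-zero solution of \<open>(H - z) \<phi> = 0\<close>\<close>
  have "b = cinner \<delta>l (RS 0) - L * (cinner \<chi>l (Rl 0) - L * gl * b) * sll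
        - M * (cinner \<chi>r (Rr 0) - M * gr * d) * slr"
    "d = cinner \<delta>r (RS 0) - L * (cinner \<chi>l (Rl 0) - L * gl * b) * srl
        - M * (cinner \<chi>r (Rr 0) - M * gr * d) * srr"
    using kernel unfolding resolvent_zero cinner_zero_right by (algebra+)
  from R_ansatz(2,3)[OF refl refl this[unfolded L_def M_def]]
  have "cinner \<delta>l (fst (snd (R lam nu (0, 0, 0)))) = b"
    "cinner \<delta>r (fst (snd (R lam nu (0, 0, 0)))) = d" .
  moreover have "R lam nu (0, 0, 0) = (0, 0, 0)"
    using symmetric_zero[OF sym_l] symmetric_zero[OF sym_S] symmetric_zero[OF sym_r]
    by (intro R_eqI) (simp_all add: dom0_def Hlamnu_triple scaleC_triple zero_prod_def)
  ultimately show False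
    using nontrivial by simp
qed

lemma R_coordinates:
  fixes lam nu :: real and \<psi>1 :: 'l and \<psi>2 :: 's and \<psi>3 :: 'r
  defines "L \<equiv> complex_of_real lam" and "M \<equiv> complex_of_real nu"
  defines "e1 \<equiv> cinner \<delta>l (RS \<psi>2) - L * sll * cinner \<chi>l (Rl \<psi>1) - M * slr * cinner \<chi>r (Rr \<psi>3)"
    and "e2 \<equiv> cinner \<delta>r (RS \<psi>2) - L * srl * cinner \<chi>l (Rl \<psi>1) - M * srr * cinner \<chi>r (Rr \<psi>3)"
  defines "b \<equiv> (e1 * (1 - M\<^sup>2 * gr * srr) + M\<^sup>2 * gr * slr * e2) / coupling_det lam nu"
  shows "cinner \<delta>l (fst (snd (R lam nu (\<psi>1, \<psi>2, \<psi>3)))) = b"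
    and "cinner \<chi>l (fst (R lam nu (\<psi>1, \<psi>2, \<psi>3))) = cinner \<chi>l (Rl \<psi>1) - L * gl * b"
proof -
  define d where "d = ((1 - L\<^sup>2 * gl * sll) * e2 + L\<^sup>2 * gl * srl * e1) / coupling_det lam nu"
  have det: "(1 - L\<^sup>2 * gl * sll) * (1 - M\<^sup>2 * gr * srr) - (- (M\<^sup>2 * gr * slr)) * (- (L\<^sup>2 * gl * srl))
      = coupling_det lam nu"
    by (simp add: coupling_det_def L_def M_def algebra_simps)
  \<comment> \<open>eliminating \<open>a\<close> and \<open>c\<close> from the consistency conditions leaves a 2 \<times> 2 system for \<open>b\<close>, \<open>d\<close>\<close>
  have "b = (e1 * (1 - M\<^sup>2 * gr * srr) - (- (M\<^sup>2 * gr * slr)) * e2) / coupling_det lam nu"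
    "d = ((1 - L\<^sup>2 * gl * sll) * e2 - (- (L\<^sup>2 * gl * srl)) * e1) / coupling_det lam nu"
    by (simp_all add: b_def d_def)
  then have "(1 - L\<^sup>2 * gl * sll) * b + (- (M\<^sup>2 * gr * slr)) * d = e1"
    "(- (L\<^sup>2 * gl * srl)) * b + (1 - M\<^sup>2 * gr * srr) * d = e2"
    using cramer_rule_2x2[OF det coupling_det_nonzero] by simp_all
  then have "b = cinner \<delta>l (RS \<psi>2) - L * (cinner \<chi>l (Rl \<psi>1) - L * gl * b) * sll
        - M * (cinner \<chi>r (Rr \<psi>3) - M * gr * d) * slr"
    "d = cinner \<delta>r (RS \<psi>2) - L * (cinner \<chi>l (Rl \<psi>1) - L * gl * b) * srl
        - M * (cinner \<chi>r (Rr \<psi>3) - M * gr * d) * srr"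
    unfolding e1_def e2_def by (algebra+)
  from R_ansatz(2,1)[OF refl refl this[unfolded L_def M_def], folded L_def]
  show "cinner \<delta>l (fst (snd (R lam nu (\<psi>1, \<psi>2, \<psi>3)))) = b"
    and "cinner \<chi>l (fst (R lam nu (\<psi>1, \<psi>2, \<psi>3))) = cinner \<chi>l (Rl \<psi>1) - L * gl * b" .
qed

lemma R_delta_l:
  "cinner \<delta>l (fst (snd (R lam nu (0, \<delta>l, 0)))) =
     ((1 - (complex_of_real nu)\<^sup>2 * gr * srr) * sll + (complex_of_real nu)\<^sup>2 * gr * slr * srl)
     / coupling_det lam nu"
  using R_coordinates(1)[of lam nu 0 \<delta>l 0] by (simp add: resolvent_zero algebra_simps)

lemma R_chi_l:
  "cinner \<chi>l (fst (R lam nu (\<chi>l, 0, 0))) =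
     gl * (1 - (complex_of_real nu)\<^sup>2 * gr * srr) / coupling_det lam nu"
proof -
  have "gl * coupling_det lam nu - complex_of_real lam * gl *
      ((- (complex_of_real lam * sll * gl)) * (1 - (complex_of_real nu)\<^sup>2 * gr * srr)
       + (complex_of_real nu)\<^sup>2 * gr * slr * (- (complex_of_real lam * srl * gl)))
      = gl * (1 - (complex_of_real nu)\<^sup>2 * gr * srr)"
    by (simp add: coupling_det_def power2_eq_square algebra_simps)
  then show ?thesis
    using R_coordinates(2)[of lam nu \<chi>l 0 0] coupling_det_nonzero[of lam nu]
    by (simp add: resolvent_zero field_simps) algebra
qed

end

theorem lemma2p1:
  fixes Hl :: "'l::chilbert \<Rightarrow> 'l" and Dl :: "'l set"
    and HS :: "'s::chilbert \<Rightarrow> 's" and DS :: "'s set"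
    and Hr :: "'r::chilbert \<Rightarrow> 'r" and Dr :: "'r set"
    and \<chi>l :: 'l and \<chi>r :: 'r and \<delta>l \<delta>r :: 's
    and lam nu :: real and z :: complex
  assumes "finite_dimensional TYPE('s)"
    and "self_adjoint Dl Hl" and "self_adjoint DS HS" and "self_adjoint Dr Hr"
    and "\<chi>l \<noteq> 0" and "\<chi>r \<noteq> 0" and "\<delta>l \<noteq> 0" and "\<delta>r \<noteq> 0"
    and "Im z \<noteq> 0"
  defines "G \<equiv> (%a b \<phi> \<psi> w. green (dom0 Dl DS Dr) (Hlamnu Hl HS Hr \<chi>l \<chi>r \<delta>l \<delta>r a b) \<phi> \<psi> w)"
  defines "G0 \<equiv> G 0 0"
  defines "D \<equiv> (1 - (complex_of_real nu)\<^sup>2 * G0 (inr3 \<chi>r) (inr3 \<chi>r) z * G0 (ins3 \<delta>r) (ins3 \<delta>r) z)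
                * (1 - (complex_of_real lam)\<^sup>2 * G0 (inl3 \<chi>l) (inl3 \<chi>l) z * G0 (ins3 \<delta>l) (ins3 \<delta>l) z)
              - (complex_of_real nu)\<^sup>2 * (complex_of_real lam)\<^sup>2 * G0 (inr3 \<chi>r) (inr3 \<chi>r) z * G0 (inl3 \<chi>l) (inl3 \<chi>l) z
                * G0 (ins3 \<delta>l) (ins3 \<delta>r) z * G0 (ins3 \<delta>r) (ins3 \<delta>l) z"
  shows "G lam nu (ins3 \<delta>l) (ins3 \<delta>l) z =
           ((1::complex) / D) * ((1 - (complex_of_real nu)\<^sup>2 * G0 (inr3 \<chi>r) (inr3 \<chi>r) z * G0 (ins3 \<delta>r) (ins3 \<delta>r) z)
                        * G0 (ins3 \<delta>l) (ins3 \<delta>l) z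
                      + (complex_of_real nu)\<^sup>2 * G0 (inr3 \<chi>r) (inr3 \<chi>r) z * G0 (ins3 \<delta>l) (ins3 \<delta>r) z
                        * G0 (ins3 \<delta>r) (ins3 \<delta>l) z)
         \<and> G lam nu (inl3 \<chi>l) (inl3 \<chi>l) z =
           ((1::complex) / D) * (G0 (inl3 \<chi>l) (inl3 \<chi>l) z
                      * (1 - (complex_of_real nu)\<^sup>2 * G0 (inr3 \<chi>r) (inr3 \<chi>r) z * G0 (ins3 \<delta>r) (ins3 \<delta>r) z))"
proof -
  interpret two_lead_model Hl Dl HS DS Hr Dr \<chi>l \<chi>r \<delta>l \<delta>r z
    using assms(2-4,9) by unfold_locales
  have G0: "G0 (inl3 \<chi>l) (inl3 \<chi>l) z = gl" "G0 (inr3 \<chi>r) (inr3 \<chi>r) z = gr"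
    "G0 (ins3 \<delta>l) (ins3 \<delta>l) z = sll" "G0 (ins3 \<delta>l) (ins3 \<delta>r) z = slr"
    "G0 (ins3 \<delta>r) (ins3 \<delta>l) z = srl" "G0 (ins3 \<delta>r) (ins3 \<delta>r) z = srr"
    by (simp_all add: G0_def G_def green_def inl3_def ins3_def inr3_def R_uncoupled cinner_prod_def)
  have "D = coupling_det lam nu"
    by (simp add: D_def G0 coupling_det_def)
  moreover have "G lam nu (ins3 \<delta>l) (ins3 \<delta>l) z = cinner \<delta>l (fst (snd (R lam nu (0, \<delta>l, 0))))"
    "G lam nu (inl3 \<chi>l) (inl3 \<chi>l) z = cinner \<chi>l (fst (R lam nu (\<chi>l, 0, 0)))"
    by (simp_all add: G_def green_def inl3_def ins3_def cinner_prod_def)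
  ultimately show ?thesis
    by (simp add: G0 R_delta_l R_chi_l)
qed

end
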